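(* Let $G$ be a finite graph with $v$ vertices and girth $\ell(G)$ (the length of a shortest cycle of $G$, with $\ell(G)=\infty$ if $G$ has no cycle). Let $m\ge 3$ and $0<i<\ell(G)$. Then $H^{i,j}_{\mathcal A_m}(G)=0$ for every $j\ge (m-1)(v-i)$.
   Context: For $m\ge 2$ let $\mathcal A_m=\mathbb Z[x]/(x^m)$. For a finite graph $G$ with vertex set $V(G)$, edge set $E(G)$ (with a fixed total order), and $s\subseteq E(G)$, let $[G:s]$ be the spanning subgraph with vertex set $V(G)$ and edge set $s$, and $k(s)$ its number of connected components. An enhanced state is a pair $(s,c)$ where $s\subseteq E(G)$ and $c$ assigns to each component $C$ of $[G:s]$ an exponent $c(C)\in\{0,\dots,m-1\}$ (i.e. a weight $x^{c(C)}$); its bidegree is $(i,j)=(|s|,\sum_C c(C))$. The cochain group $C^{i,j}_{\mathcal A_m}(G)$ is the free abelian group on enhanced states of bidegree $(i,j)$ (equivalently the degree-$j$ part of $\bigoplus_{|s|=i}\mathcal A_m^{\otimes k(s)}$, one tensor factor per component). The differential $d:C^{i,j}\to C^{i+1,j}$ is $d=\sum_{e\notin s}(-1)^{|\{f\in s: f<e\}|}d_e$, where for $e\notin s$: if $e$ joins two different components $C_1,C_2$ of $[G:s]$, then $d_e(s,c)$ is the enhanced state on $s\cup\{e\}$ in which the merged component gets weight $x^{c(C_1)}x^{c(C_2)}$ in $\mathcal A_m$ (so $d_e(s,c)=0$ if $c(C_1)+c(C_2)\ge m$) and all other components keep their weights; if both endpoints of $e$ lie in the same component of $[G:s]$, $d_e(s,c)$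 is the enhanced state on $s\cup\{e\}$ with the same weights (identity map). $H^{i,j}_{\mathcal A_m}(G)$ denotes the cohomology of this complex (chromatic graph cohomology with algebra $\mathcal A_m$). *)

theory Defs
  imports Main "HOL-Library.Extended_Nat"
begin

text \<open>A finite (multi)graph is given by a finite vertex set V and a list es of edges;
 edge number k (k < length es) joins the endpoints es ! k.  The total order on edges
 is the order of the indices.\<close>

definition wf_graph :: "'a set \<Rightarrow> ('a \<times> 'a) list \<Rightarrow> bool" where
  "wf_graph V es \<longleftrightarrow> finite V \<and> (\<forall>(a,b)\<in>set es. a \<in> V \<and> b \<in> V)"

definition is_cycle_length :: "('a \<times> 'a) list \<Rightarrow> nat \<Rightarrow> bool" where
  "is_cycle_length es k \<longleftrightarrow> k \<ge> 1 \<and>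
     (\<exists>e w. inj_on e {..<k} \<and> inj_on w {..<k} \<and>
        (\<forall>t<k. e t < length es \<and>
           (es ! e t = (w t, w (Suc t mod k)) \<or> es ! e t = (w (Suc t mod k), w t))))"

definition girth :: "('a \<times> 'a) list \<Rightarrow> enat" where
  "girth es = Inf {enat k | k. is_cycle_length es k}"

definition edge_rel :: "('a \<times> 'a) list \<Rightarrow> nat set \<Rightarrow> ('a \<times> 'a) set" where
  "edge_rel es s = {(a,b). \<exists>e\<in>s. e < length es \<and> (es ! e = (a,b) \<or> es ! e = (b,a))}"

definition comp_of :: "('a \<times> 'a) list \<Rightarrow> nat set \<Rightarrow> 'a \<Rightarrow> 'a set" where
  "comp_of es s x = (edge_rel es s)\<^sup>* `` {x}"

definition comps :: "'a set \<Rightarrow> ('a \<times> 'a) list \<Rightarrow> nat set \<Rightarrow> 'a set set" where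
  "comps V es s = comp_of es s ` V"

text \<open>Enhanced states: (s, c) with c the exponent on each component (0 off components).\<close>
type_synonym 'a state = "nat set \<times> ('a set \<Rightarrow> nat)"

definition states :: "'a set \<Rightarrow> ('a \<times> 'a) list \<Rightarrow> nat \<Rightarrow> nat \<Rightarrow> nat \<Rightarrow> 'a state set" where
  "states V es m i j = {(s, c). s \<subseteq> {..<length es} \<and> card s = i \<and>
       (\<forall>C\<in>comps V es s. c C < m) \<and> (\<forall>C. C \<notin> comps V es s \<longrightarrow> c C = 0) \<and>
       (\<Sum>C\<in>comps V es s. c C) = j}"

text \<open>The component map d_e applied to a basis state; None means 0.\<close>
definition d_edge :: "'a set \<Rightarrow> ('a \<times> 'a) list \<Rightarrow> nat \<Rightarrow> nat \<Rightarrow> 'a state \<Rightarrow> 'a state option" where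
  "d_edge V es m e st = (case st of (s, c) \<Rightarrow>
     (let Ca = comp_of es s (fst (es ! e)); Cb = comp_of es s (snd (es ! e)); s' = insert e s in
      if Ca = Cb then Some (s', c)
      else if c Ca + c Cb \<ge> m then None
      else Some (s', (\<lambda>C. if C = Ca \<union> Cb then c Ca + c Cb
                          else if C \<in> comps V es s' then c C else 0))))"

definition d_state :: "'a set \<Rightarrow> ('a \<times> 'a) list \<Rightarrow> nat \<Rightarrow> 'a state \<Rightarrow> 'a state \<Rightarrow> int" where
  "d_state V es m st t = (\<Sum>e\<in>{e. e < length es \<and> e \<notin> fst st}.
      if d_edge V es m e st = Some t then (-1) ^ card {f\<in>fst st. f < e} else 0)"

definition cochain :: "'a set \<Rightarrow> ('a \<times> 'a) list \<Rightarrow> nat \<Rightarrow> nat \<Rightarrow> nat \<Rightarrow> ('a state \<Rightarrow> int) \<Rightarrow> bool" where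
  "cochain V es m i j x \<longleftrightarrow> (\<forall>st. st \<notin> states V es m i j \<longrightarrow> x st = 0)"

definition dco :: "'a set \<Rightarrow> ('a \<times> 'a) list \<Rightarrow> nat \<Rightarrow> nat \<Rightarrow> nat \<Rightarrow> ('a state \<Rightarrow> int) \<Rightarrow> 'a state \<Rightarrow> int" where
  "dco V es m i j x = (\<lambda>t. \<Sum>st\<in>states V es m i j. x st * d_state V es m st t)"

definition cohom_vanishes :: "'a set \<Rightarrow> ('a \<times> 'a) list \<Rightarrow> nat \<Rightarrow> nat \<Rightarrow> nat \<Rightarrow> bool" where
  "cohom_vanishes V es m i j \<longleftrightarrow>
     (\<forall>x. cochain V es m i j x \<and> dco V es m i j x = (\<lambda>_. 0) \<longrightarrow>
        (\<exists>y. cochain V es m (i - 1) j y \<and> dco V es m (i - 1) j y = x))"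

end

theory Submission
  imports Defs
begin

text \<open>
  Since i is below the girth, every spanning subgraph [G:s] with i edges is a forest with
  card V - i components. Hence the bound on j leaves only the top states in bidegree (i, j):
  every component carries x^(m-1). The differential of the top state on s only survives along
  edges of the closure of s (edges whose endpoints are already connected in [G:s]).

  Call the least edge of the closure of s its pivot. If the pivot lies in s, deleting it splits
  one component into two halves; weighting them by x and x^(m-2) (here m \<ge> 3 is needed) gives a
  cut state of bidegree (i - 1, j), whose differential is the signed sum of the top states on the
  edge sets obtained by reconnecting the two halves. For a cocycle x, the combination of the cut
  states with coefficients x(s) is a primitive of x: at a top state u whose pivot lies in u the
  only contribution is x(u) itself, and otherwise the contributions add up to x(u) by the
  cocycle condition at u plus its pivot.
\<close>

section \<open>Components of spanning subgraphs\<close>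

lemma sym_edge_rel: "sym (edge_rel es s)"
  by (auto simp: sym_def edge_rel_def)

lemma comp_of_self: "x \<in> comp_of es s x"
  by (simp add: comp_of_def)

lemma edge_rel_rtrancl_sym: "(x, y) \<in> (edge_rel es s)\<^sup>* \<Longrightarrow> (y, x) \<in> (edge_rel es s)\<^sup>*"
  by (meson sym_rtrancl sym_edge_rel symD)

lemma comp_of_eq: "y \<in> comp_of es s x \<Longrightarrow> comp_of es s y = comp_of es s x"
  unfolding comp_of_def by (auto dest: edge_rel_rtrancl_sym intro: rtrancl_trans)

lemma edge_in_comp_of: "e \<in> s \<Longrightarrow> e < length es \<Longrightarrow> snd (es ! e) \<in> comp_of es s (fst (es ! e))"
  unfolding comp_of_def edge_rel_def by auto

lemma comp_of_mono: "s \<subseteq> t \<Longrightarrow> comp_of es s x \<subseteq> comp_of es t x"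
  unfolding comp_of_def edge_rel_def by (intro Image_mono rtrancl_mono) auto

lemma edge_rel_insert:
  "e < length es \<Longrightarrow> edge_rel es (insert e s) =
    edge_rel es s \<union> {(fst (es ! e), snd (es ! e)), (snd (es ! e), fst (es ! e))}"
  by (cases "es ! e") (auto simp: edge_rel_def)

lemma comp_of_insert_joins_endpoints:
  assumes e: "e < length es"
  shows "comp_of es s (fst (es ! e)) \<union> comp_of es s (snd (es ! e)) \<subseteq>
    comp_of es (insert e s) (fst (es ! e))"
proof -
  have "snd (es ! e) \<in> comp_of es (insert e s) (fst (es ! e))"
    using e by (intro edge_in_comp_of) auto
  then have "comp_of es (insert e s) (snd (es ! e)) = comp_of es (insert e s) (fst (es ! e))"
    by (rule comp_of_eq)
  then show ?thesis
    using comp_of_mono[of s "insert e s" es "fst (es ! e)"]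
      comp_of_mono[of s "insert e s" es "snd (es ! e)"] by auto
qed

lemma comp_of_insert:
  fixes es :: "('a \<times> 'a) list" and s :: "nat set"
  assumes e: "e < length es"
  defines "P \<equiv> comp_of es s (fst (es ! e)) \<union> comp_of es s (snd (es ! e))"
  shows "comp_of es (insert e s) x = (if x \<in> P then P else comp_of es s x)"
proof -
  let ?p = "fst (es ! e)" and ?q = "snd (es ! e)" and ?C = "comp_of es s"
  define f where "f x = (if x \<in> P then P else ?C x)" for x
  have P_union: "?C y \<subseteq> P" if "y \<in> P" for y
    using that comp_of_eq[of y es s] unfolding P_def by auto
  have f_class: "f y = f x" if "y \<in> f x" for x y
  proof (cases "x \<in> P")
    case False
    with that have "y \<in> ?C x" by (simp add: f_def)
    then have "?C y = ?C x" by (rule comp_of_eq)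
    moreover have "y \<notin> P"
    proof
      assume "y \<in> P"
      then have "x \<in> P" using P_union \<open>?C y = ?C x\<close> comp_of_self by (metis subsetD)
      with False show False ..
    qed
    ultimately show ?thesis using False by (simp add: f_def)
  qed (use that in \<open>simp add: f_def\<close>)
  have f_step: "z \<in> f y" if yz: "(y, z) \<in> edge_rel es (insert e s)" for y z
  proof -
    have "(y, z) \<in> edge_rel es s \<or> (y, z) = (?p, ?q) \<or> (y, z) = (?q, ?p)"
      using yz unfolding edge_rel_insert[OF e] by blast
    then consider "(y, z) \<in> edge_rel es s" | "y \<in> P" "z \<in> P"
      using comp_of_self[of ?p es s] comp_of_self[of ?q es s] unfolding P_def by blast
    then show ?thesis
    proof cases
      case 1
      then have "z \<in> ?C y" by (simp add: comp_of_def)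
      then show ?thesis using P_union by (auto simp: f_def)
    qed (simp add: f_def)
  qed
  have closed: "edge_rel es (insert e s) `` f x \<subseteq> f x"
  proof (rule subsetI, elim ImageE)
    fix y z assume y: "y \<in> f x" and yz: "(y, z) \<in> edge_rel es (insert e s)"
    show "z \<in> f x" using f_step[OF yz] f_class[OF y] by simp
  qed
  have "comp_of es (insert e s) x \<subseteq> (edge_rel es (insert e s))\<^sup>* `` f x"
    unfolding comp_of_def using comp_of_self[of x es s] by (intro Image_mono) (auto simp: f_def)
  also have "\<dots> = f x" using closed by (rule Image_closed_trancl)
  finally have "comp_of es (insert e s) x \<subseteq> f x" .
  moreover have "f x \<subseteq> comp_of es (insert e s) x"
  proof (cases "x \<in> P")
    case True
    have "P \<subseteq> comp_of es (insert e s) ?p"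
      unfolding P_def using e by (rule comp_of_insert_joins_endpoints)
    moreover from this True have "comp_of es (insert e s) x = comp_of es (insert e s) ?p"
      by (intro comp_of_eq) auto
    ultimately show ?thesis using True by (simp add: f_def)
  qed (auto simp: f_def intro: comp_of_mono[THEN subsetD])
  ultimately show ?thesis by (simp add: f_def)
qed

lemma mem_comp_of_iff: "y \<in> comp_of es s x \<longleftrightarrow> comp_of es s y = comp_of es s x"
  by (metis comp_of_eq comp_of_self)

lemma comp_of_Un_eq_imp_eq:
  assumes "comp_of es s x \<union> comp_of es s y = comp_of es s x' \<union> comp_of es s y'"
  shows "{comp_of es s x, comp_of es s y} = {comp_of es s x', comp_of es s y'}"
proof -
  have in_pair: "comp_of es s z \<in> {comp_of es s u, comp_of es s v}"
    if "z \<in> comp_of es s u \<union> comp_of es s v" for z u v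
    using that by (auto dest: comp_of_eq)
  have mem: "x \<in> comp_of es s x' \<union> comp_of es s y'" "y \<in> comp_of es s x' \<union> comp_of es s y'"
    "x' \<in> comp_of es s x \<union> comp_of es s y" "y' \<in> comp_of es s x \<union> comp_of es s y"
    using assms comp_of_self[of _ es s] by blast+
  show ?thesis
    using in_pair[OF mem(1)] in_pair[OF mem(2)] in_pair[OF mem(3)] in_pair[OF mem(4)]
    by (simp only: set_eq_subset insert_subset empty_subsetI simp_thms)
qed

lemma comp_of_insert_eq_iff:
  assumes e: "e < length es" and a: "a < length es"
    and separate: "comp_of es s (fst (es ! a)) \<noteq> comp_of es s (snd (es ! a))"
  shows "comp_of es (insert e s) = comp_of es (insert a s) \<longleftrightarrow>
    {comp_of es s (fst (es ! e)), comp_of es s (snd (es ! e))} =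
    {comp_of es s (fst (es ! a)), comp_of es s (snd (es ! a))}"
proof -
  let ?Pe = "comp_of es s (fst (es ! e)) \<union> comp_of es s (snd (es ! e))"
  let ?Pa = "comp_of es s (fst (es ! a)) \<union> comp_of es s (snd (es ! a))"
  have "?Pe = ?Pa" if eq: "comp_of es (insert e s) = comp_of es (insert a s)"
  proof -
    have "fst (es ! a) \<in> ?Pa" by (simp add: comp_of_self)
    then have "comp_of es (insert e s) (fst (es ! a)) = ?Pa"
      using eq comp_of_insert[OF a] by simp
    moreover have "?Pa \<noteq> comp_of es s (fst (es ! a))"
    proof
      assume "?Pa = comp_of es s (fst (es ! a))"
      then have "snd (es ! a) \<in> comp_of es s (fst (es ! a))"
        using comp_of_self[of "snd (es ! a)" es s] by blast
      with separate show False by (simp add: mem_comp_of_iff)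
    qed
    ultimately have "fst (es ! a) \<in> ?Pe"
      using comp_of_insert[OF e, of s "fst (es ! a)"] by argo
    then show ?thesis
      using comp_of_insert[OF e] \<open>comp_of es (insert e s) (fst (es ! a)) = ?Pa\<close> by simp
  qed
  moreover have "?Pe = ?Pa \<longleftrightarrow> {comp_of es s (fst (es ! e)), comp_of es s (snd (es ! e))} =
    {comp_of es s (fst (es ! a)), comp_of es s (snd (es ! a))}"
  proof
    assume "{comp_of es s (fst (es ! e)), comp_of es s (snd (es ! e))} =
      {comp_of es s (fst (es ! a)), comp_of es s (snd (es ! a))}"
    then have "\<Union>{comp_of es s (fst (es ! e)), comp_of es s (snd (es ! e))} =
      \<Union>{comp_of es s (fst (es ! a)), comp_of es s (snd (es ! a))}" by (rule arg_cong)
    then show "?Pe = ?Pa" by simp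
  qed (rule comp_of_Un_eq_imp_eq)
  moreover have "comp_of es (insert e s) = comp_of es (insert a s)" if "?Pe = ?Pa"
    using that by (intro ext) (simp add: comp_of_insert[OF e] comp_of_insert[OF a])
  ultimately show ?thesis by blast
qed

section \<open>Short cycles\<close>

lemma rtrancl_imp_injective_walk:
  assumes "(p, q) \<in> R\<^sup>*"
  obtains k w where "w 0 = p" "w k = q" "\<forall>t<k. (w t, w (Suc t)) \<in> R" "inj_on w {..k}"
proof -
  define k where "k = (LEAST k. (p, q) \<in> R ^^ k)"
  from assms obtain n where "(p, q) \<in> R ^^ n"
    using rtrancl_power by blast
  then have "(p, q) \<in> R ^^ k"
    unfolding k_def by (rule LeastI)
  then obtain w where w: "w 0 = p" "w k = q" "\<forall>t<k. (w t, w (Suc t)) \<in> R"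
    unfolding relpow_fun_conv by blast
  have no_repeat: "w a \<noteq> w b" if "a < b" "b \<le> k" for a b
  proof
    assume "w a = w b"
    have "(p, w a) \<in> R ^^ a"
      unfolding relpow_fun_conv using w that by (intro exI[of _ w]) simp
    moreover have "(w a, q) \<in> R ^^ (k - b)"
      unfolding relpow_fun_conv using w that \<open>w a = w b\<close>
      by (intro exI[of _ "\<lambda>t. w (b + t)"]) simp
    ultimately have "(p, q) \<in> R ^^ (a + (k - b))"
      unfolding relpow_add by (rule relcompI)
    then have "k \<le> a + (k - b)"
      unfolding k_def by (rule Least_le)
    with that show False by linarith
  qed
  have "inj_on w {..k}"
  proof (rule inj_onI)
    fix a b assume "a \<in> {..k}" "b \<in> {..k}" "w a = w b"
    then show "a = b"
      using no_repeat[of a b] no_repeat[of b a] by (cases a b rule: linorder_cases) auto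
  qed
  with w show thesis by (rule that)
qed
lemma injective_walk_edges:
  assumes walk: "\<forall>t<k. (w t, w (Suc t)) \<in> edge_rel es s" and inj_w: "inj_on w {..k}"
  obtains ed where "inj_on ed {..<k}"
    "\<And>t. t < k \<Longrightarrow> ed t \<in> s \<and> ed t < length es \<and>
      (es ! ed t = (w t, w (Suc t)) \<or> es ! ed t = (w (Suc t), w t))"
proof -
  define joins where "joins f t \<longleftrightarrow> f < length es \<and>
    (es ! f = (w t, w (Suc t)) \<or> es ! f = (w (Suc t), w t))" for f t
  have "\<forall>t<k. \<exists>f\<in>s. joins f t"
    using walk unfolding edge_rel_def joins_def by blast
  then obtain ed where ed: "\<And>t. t < k \<Longrightarrow> ed t \<in> s \<and> joins (ed t) t"
    by metis
  have inj_ed: "inj_on ed {..<k}"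
  proof (rule inj_onI, rule ccontr)
    fix a b assume ab: "a \<in> {..<k}" "b \<in> {..<k}" "ed a = ed b" "a \<noteq> b"
    then have "(w a = w b \<and> w (Suc a) = w (Suc b)) \<or> (w a = w (Suc b) \<and> w (Suc a) = w b)"
      using ed[of a] ed[of b] unfolding joins_def by auto
    then show False
      using ab inj_onD[OF inj_w, of a b] inj_onD[OF inj_w, of a "Suc b"]
        inj_onD[OF inj_w, of "Suc a" "b"] by auto
  qed
  show thesis
    using that[OF inj_ed] ed unfolding joins_def by blast
qed

text \<open>Closing an injective walk between the endpoints of e by e itself gives a cycle.\<close>
lemma girth_le_if_endpoints_connected:
  assumes "finite s" "e < length es" "e \<notin> s"
    and conn: "snd (es ! e) \<in> comp_of es s (fst (es ! e))"
  shows "girth es \<le> enat (Suc (card s))"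
proof -
  from conn have "(fst (es ! e), snd (es ! e)) \<in> (edge_rel es s)\<^sup>*"
    by (simp add: comp_of_def)
  then obtain k w where w: "w 0 = fst (es ! e)" "w k = snd (es ! e)"
    "\<forall>t<k. (w t, w (Suc t)) \<in> edge_rel es s" and inj_w: "inj_on w {..k}"
    by (rule rtrancl_imp_injective_walk)
  obtain ed where inj_ed: "inj_on ed {..<k}" and ed: "\<And>t. t < k \<Longrightarrow> ed t \<in> s \<and>
      ed t < length es \<and> (es ! ed t = (w t, w (Suc t)) \<or> es ! ed t = (w (Suc t), w t))"
    using injective_walk_edges[OF w(3) inj_w] by blast
  have "k = card (ed ` {..<k})"
    using card_image[OF inj_ed] by simp
  also have "\<dots> \<le> card s"
    using ed assms(1) by (intro card_mono) auto
  finally have k_le: "k \<le> card s" .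
  define E where "E t = (if t < k then ed t else e)" for t
  have "is_cycle_length es (Suc k)"
    unfolding is_cycle_length_def
  proof (intro conjI exI[of _ E] exI[of _ w])
    show "inj_on E {..<Suc k}"
      using inj_ed ed assms(3) unfolding E_def inj_on_def by (metis lessThan_iff less_SucE)
    show "inj_on w {..<Suc k}"
      using inj_w by (simp add: lessThan_Suc_atMost)
    show "\<forall>t<Suc k. E t < length es \<and> (es ! E t = (w t, w (Suc t mod Suc k))
      \<or> es ! E t = (w (Suc t mod Suc k), w t))"
    proof (intro allI impI)
      fix t assume "t < Suc k"
      then consider "t < k" | "t = k" by linarith
      then show "E t < length es \<and> (es ! E t = (w t, w (Suc t mod Suc k))
        \<or> es ! E t = (w (Suc t mod Suc k), w t))"
        by cases (use ed w assms(2) in \<open>auto simp: E_def\<close>)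
    qed
  qed simp
  then have "girth es \<le> enat (Suc k)"
    unfolding girth_def by (auto intro: Inf_lower)
  with k_le show ?thesis
    by (meson enat_ord_simps(1) order_trans Suc_le_mono)
qed

lemma endpoint_comps_ne_below_girth:
  assumes "finite r" "e < length es" "e \<notin> r" "enat (Suc (card r)) < girth es"
  shows "comp_of es r (fst (es ! e)) \<noteq> comp_of es r (snd (es ! e))"
proof
  assume "comp_of es r (fst (es ! e)) = comp_of es r (snd (es ! e))"
  then have "snd (es ! e) \<in> comp_of es r (fst (es ! e))"
    by (metis comp_of_self)
  then have "girth es \<le> enat (Suc (card r))"
    by (rule girth_le_if_endpoints_connected[OF assms(1-3)])
  with assms(4) show False by (auto dest: leD)
qed

definition edge_sign :: "nat set \<Rightarrow> nat \<Rightarrow> int" where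
  "edge_sign s e = (-1) ^ card {f \<in> s. f < e}"

lemma edge_sign_eq_1: "(\<And>f. f \<in> s \<Longrightarrow> e \<le> f) \<Longrightarrow> edge_sign s e = 1"
proof -
  assume "\<And>f. f \<in> s \<Longrightarrow> e \<le> f"
  then have "{f \<in> s. f < e} = {}" by force
  then show ?thesis unfolding edge_sign_def by (metis card.empty power_0)
qed

lemma edge_sign_insert_less:
  assumes "finite s" "a < e" "a \<notin> s"
  shows "edge_sign (insert a s) e = - edge_sign s e"
proof -
  have "{f \<in> insert a s. f < e} = insert a {f \<in> s. f < e}" using assms by auto
  then have "card {f \<in> insert a s. f < e} = Suc (card {f \<in> s. f < e})"
    using assms by simp
  then show ?thesis by (simp add: edge_sign_def)
qed

lemma fst_d_edge: "d_edge V es m e st = Some t \<Longrightarrow> fst t = insert e (fst st)"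
  by (cases st) (auto simp: d_edge_def Let_def split: if_splits)

lemma d_state_nonzero_imp:
  assumes "d_state V es m st t \<noteq> 0"
  shows "\<exists>e. e < length es \<and> e \<notin> fst st \<and> d_edge V es m e st = Some t"
proof (rule ccontr)
  assume "\<not> ?thesis"
  then have "d_state V es m st t = 0"
    unfolding d_state_def by (intro sum.neutral) auto
  with assms show False ..
qed

text \<open>The edge set of the target determines the only edge that can contribute.\<close>
lemma d_state_single_edge:
  assumes e: "e < length es" "e \<notin> fst st" and t: "fst t = insert e (fst st)"
  shows "d_state V es m st t = (if d_edge V es m e st = Some t then edge_sign (fst st) e else 0)"
proof -
  have other: "d_edge V es m g st \<noteq> Some t" if "g \<notin> fst st" "g \<noteq> e" for g
  proof
    assume "d_edge V es m g st = Some t"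
    then have "insert g (fst st) = insert e (fst st)" using fst_d_edge t by metis
    with that e(2) show False by blast
  qed
  have "d_state V es m st t = (\<Sum>g\<in>{g. g < length es \<and> g \<notin> fst st}.
      if g = e then (if d_edge V es m e st = Some t then edge_sign (fst st) e else 0) else 0)"
    unfolding d_state_def edge_sign_def using other by (intro sum.cong) auto
  also have "\<dots> = (if d_edge V es m e st = Some t then edge_sign (fst st) e else 0)"
    using e by simp
  finally show ?thesis .
qed

locale finite_graph =
  fixes V :: "'a set" and es :: "('a \<times> 'a) list"
  assumes wf_graph: "wf_graph V es"
begin

lemma finite_V: "finite V"
  using wf_graph by (simp add: wf_graph_def)

lemma endpoints_in_V:
  assumes "e < length es" shows "fst (es ! e) \<in> V" "snd (es ! e) \<in> V"
proof -
  have "es ! e \<in> set es" using assms by simp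
  with wf_graph show "fst (es ! e) \<in> V" "snd (es ! e) \<in> V"
    unfolding wf_graph_def by (cases "es ! e"; fastforce)+
qed

lemma comp_of_subset_V: "x \<in> V \<Longrightarrow> comp_of es s x \<subseteq> V"
proof
  fix y assume "x \<in> V" "y \<in> comp_of es s x"
  then have "(x, y) \<in> (edge_rel es s)\<^sup>*" by (simp add: comp_of_def)
  then show "y \<in> V" using \<open>x \<in> V\<close>
    by (induction rule: rtrancl_induct) (auto simp: edge_rel_def dest: endpoints_in_V)
qed

lemma finite_comps: "finite (comps V es s)"
  unfolding comps_def using finite_V by simp

lemma comp_of_in_comps: "x \<in> V \<Longrightarrow> comp_of es s x \<in> comps V es s"
  by (simp add: comps_def)

context
  fixes s :: "nat set" and e :: nat
  assumes e: "e < length es"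
    and separate: "comp_of es s (fst (es ! e)) \<noteq> comp_of es s (snd (es ! e))"
begin

lemma comps_insert_separate:
  "comps V es (insert e s) = insert (comp_of es s (fst (es ! e)) \<union> comp_of es s (snd (es ! e)))
     (comps V es s - {comp_of es s (fst (es ! e)), comp_of es s (snd (es ! e))})"
  (is "_ = insert (?Cp \<union> ?Cq) (_ - {?Cp, ?Cq})")
proof -
  have other: "comp_of es s x \<notin> {?Cp, ?Cq}" if "x \<notin> ?Cp \<union> ?Cq" for x
    using that comp_of_self[of x es s] by auto
  have merged: "comp_of es (insert e s) x = ?Cp \<union> ?Cq" if "x \<in> ?Cp \<union> ?Cq" for x
    using comp_of_insert[OF e] that by simp
  have unchanged: "comp_of es (insert e s) x = comp_of es s x" if "x \<notin> ?Cp \<union> ?Cq" for x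
    using comp_of_insert[OF e] that by simp
  show ?thesis
  proof (intro equalityI subsetI)
    fix D assume "D \<in> comps V es (insert e s)"
    then obtain x where x: "x \<in> V" "D = comp_of es (insert e s) x" by (auto simp: comps_def)
    show "D \<in> insert (?Cp \<union> ?Cq) (comps V es s - {?Cp, ?Cq})"
    proof (cases "x \<in> ?Cp \<union> ?Cq")
      case True
      then show ?thesis using x merged by simp
    next
      case False
      then show ?thesis using x unchanged[OF False] other[OF False] comp_of_in_comps by simp
    qed
  next
    fix D assume D: "D \<in> insert (?Cp \<union> ?Cq) (comps V es s - {?Cp, ?Cq})"
    show "D \<in> comps V es (insert e s)"
    proof (cases "D = ?Cp \<union> ?Cq")
      case True
      have "comp_of es (insert e s) (fst (es ! e)) = ?Cp \<union> ?Cq"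
        using merged[of "fst (es ! e)"] comp_of_self[of "fst (es ! e)" es s] by simp
      moreover have "comp_of es (insert e s) (fst (es ! e)) \<in> comps V es (insert e s)"
        using endpoints_in_V(1)[OF e] by (rule comp_of_in_comps)
      ultimately show ?thesis using True by simp
    next
      case False
      with D obtain x where x: "x \<in> V" "D = comp_of es s x" "D \<notin> {?Cp, ?Cq}"
        by (auto simp: comps_def)
      then have "x \<notin> ?Cp \<union> ?Cq"
        using comp_of_eq[of x es s] by blast
      then show ?thesis using x unchanged comp_of_in_comps by metis
    qed
  qed
qed

lemma card_comps_insert_separate:
  "card (comps V es (insert e s)) = card (comps V es s) - 1"
proof -
  let ?Cp = "comp_of es s (fst (es ! e))" and ?Cq = "comp_of es s (snd (es ! e))"
  have in_comps: "?Cp \<in> comps V es s" "?Cq \<in> comps V es s"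
    using endpoints_in_V[OF e] by (simp_all add: comp_of_in_comps)
  have "?Cp \<union> ?Cq \<notin> comps V es s"
  proof
    assume "?Cp \<union> ?Cq \<in> comps V es s"
    then obtain x where x: "?Cp \<union> ?Cq = comp_of es s x" by (auto simp: comps_def)
    then have "?Cp = comp_of es s x" "?Cq = comp_of es s x"
      using comp_of_eq comp_of_self by (metis Un_iff)+
    with separate show False by simp
  qed
  then have "card (comps V es (insert e s)) = Suc (card (comps V es s - {?Cp, ?Cq}))"
    unfolding comps_insert_separate using finite_comps by simp
  also have "\<dots> = Suc (card (comps V es s) - 2)"
    using in_comps separate finite_comps by (subst card_Diff_subset) auto
  also have "\<dots> = card (comps V es s) - 1"
    using card_mono[OF finite_comps[of s], of "{?Cp, ?Cq}"] in_comps separate by simp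
  finally show ?thesis .
qed

end

text \<open>Below the girth every edge set is a forest, so each edge reduces the number of
  components by one.\<close>
lemma card_comps_add_card_le:
  assumes "finite s" "s \<subseteq> {..<length es}" "enat (card s) < girth es"
  shows "card (comps V es s) + card s \<le> card V"
  using assms
proof (induction s rule: finite_induct)
  case empty
  have "comps V es {} = (\<lambda>x. {x}) ` V"
    by (auto simp: comps_def comp_of_def edge_rel_def)
  then show ?case using card_image_le[OF finite_V] by simp
next
  case (insert e s)
  have e: "e < length es" and s: "s \<subseteq> {..<length es}" using insert.prems by auto
  have "enat (Suc (card s)) < girth es" using insert.prems(2) insert.hyps by simp
  then have separate: "comp_of es s (fst (es ! e)) \<noteq> comp_of es s (snd (es ! e))"
    using insert.hyps(1,2) e by (intro endpoint_comps_ne_below_girth)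
  have "comps V es s \<noteq> {}" using endpoints_in_V[OF e] by (auto simp: comps_def)
  then have "card (comps V es s) \<ge> 1" using finite_comps by (simp add: Suc_leI card_gt_0_iff)
  moreover have "enat (card s) < girth es"
    using Suc_ile_eq \<open>enat (Suc (card s)) < girth es\<close> order_less_imp_le by blast
  then have "card (comps V es s) + card s \<le> card V"
    using insert.IH s by blast
  ultimately show ?case
    using card_comps_insert_separate[OF e separate] insert.hyps by simp
qed

lemma finite_states: "finite (states V es m k j)"
proof (rule finite_subset)
  let ?W = "{c. \<forall>C. (C \<in> Pow V \<longrightarrow> c C \<in> {..m}) \<and> (C \<notin> Pow V \<longrightarrow> c C = 0)}"
  have comps_Pow: "comps V es s \<subseteq> Pow V" for s
    using comp_of_subset_V by (auto simp: comps_def)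
  show "states V es m k j \<subseteq> Pow {..<length es} \<times> ?W"
  proof
    fix st assume "st \<in> states V es m k j"
    then obtain s c where st: "st = (s, c)" "s \<subseteq> {..<length es}"
      and below_m: "\<forall>C\<in>comps V es s. c C < m"
      and zero: "\<forall>C. C \<notin> comps V es s \<longrightarrow> c C = 0"
      by (auto simp: states_def)
    have "c C \<le> m" for C
      using below_m zero by (cases "C \<in> comps V es s") auto
    moreover have "c C = 0" if "C \<notin> Pow V" for C
      using zero comps_Pow[of s] that by blast
    ultimately have "c \<in> ?W" by auto
    with st show "st \<in> Pow {..<length es} \<times> ?W" by simp
  qed
  show "finite (Pow {..<length es} \<times> ?W)"
    using finite_V by (intro finite_cartesian_product finite_set_of_finite_funs) auto
qed

lemma dco_sum_basis:
  assumes "finite A" "\<And>a. a \<in> A \<Longrightarrow> b a \<in> states V es m k j"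
  shows "dco V es m k j (\<lambda>st. \<Sum>a\<in>A. if st = b a then c a else 0) t =
    (\<Sum>a\<in>A. c a * d_state V es m (b a) t)"
proof -
  have "dco V es m k j (\<lambda>st. \<Sum>a\<in>A. if st = b a then c a else 0) t =
      (\<Sum>st\<in>states V es m k j. \<Sum>a\<in>A. if st = b a then c a * d_state V es m st t else 0)"
    unfolding dco_def sum_distrib_right by (intro sum.cong) auto
  also have "\<dots> = (\<Sum>a\<in>A. \<Sum>st\<in>states V es m k j. if st = b a then c a * d_state V es m st t else 0)"
    by (rule sum.swap)
  also have "\<dots> = (\<Sum>a\<in>A. c a * d_state V es m (b a) t)"
    using assms(2) finite_states by (intro sum.cong) simp_all
  finally show ?thesis .
qed

end

section \<open>Closure and pivot\<close>

definition edge_closure :: "('a \<times> 'a) list \<Rightarrow> nat set \<Rightarrow> nat set" where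
  "edge_closure es s = {e. e < length es \<and> snd (es ! e) \<in> comp_of es s (fst (es ! e))}"

definition pivot :: "('a \<times> 'a) list \<Rightarrow> nat set \<Rightarrow> nat" where
  "pivot es s = Min (edge_closure es s)"

lemma finite_edge_closure: "finite (edge_closure es s)"
  by (rule finite_subset[of _ "{..<length es}"]) (auto simp: edge_closure_def)

lemma subset_edge_closure: "s \<subseteq> {..<length es} \<Longrightarrow> s \<subseteq> edge_closure es s"
  using edge_in_comp_of by (fastforce simp: edge_closure_def)

lemma edge_closure_cong: "comp_of es s = comp_of es u \<Longrightarrow> edge_closure es s = edge_closure es u"
  by (simp add: edge_closure_def)

lemma pivot_cong: "comp_of es s = comp_of es u \<Longrightarrow> pivot es s = pivot es u"
  unfolding pivot_def edge_closure_def by simp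

lemma pivot_in_edge_closure:
  assumes "s \<subseteq> {..<length es}" "s \<noteq> {}"
  shows "pivot es s \<in> edge_closure es s"
  unfolding pivot_def using finite_edge_closure subset_edge_closure[OF assms(1)] assms(2)
  by (intro Min_in) auto

lemma pivot_le: "e \<in> edge_closure es s \<Longrightarrow> pivot es s \<le> e"
  unfolding pivot_def using finite_edge_closure by (rule Min_le)

lemma comp_of_insert_edge_closure:
  assumes "e \<in> edge_closure es s"
  shows "comp_of es (insert e s) = comp_of es s"
proof
  fix x
  let ?Cp = "comp_of es s (fst (es ! e))"
  have e: "e < length es" and "snd (es ! e) \<in> ?Cp"
    using assms by (simp_all add: edge_closure_def)
  then have same: "comp_of es s (snd (es ! e)) = ?Cp" by (simp add: comp_of_eq)
  show "comp_of es (insert e s) x = comp_of es s x"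
  proof (cases "x \<in> ?Cp")
    case True
    then show ?thesis using comp_of_insert[OF e, of s x] same comp_of_eq[OF True] by simp
  next
    case False
    then show ?thesis using comp_of_insert[OF e, of s x] same by simp
  qed
qed

section \<open>Top states and cut states\<close>

locale chromatic_top_degree = finite_graph +
  fixes m i j :: nat
  assumes m_ge_3: "3 \<le> m" and i_pos: "0 < i" and i_lt_girth: "enat i < girth es"
    and j_ge: "(m - 1) * (card V - i) \<le> j"
begin

definition top_weight :: "nat set \<Rightarrow> 'a set \<Rightarrow> nat" where
  "top_weight s C = (if C \<in> comps V es s then m - 1 else 0)"

definition top_state :: "nat set \<Rightarrow> 'a state" where
  "top_state s = (s, top_weight s)"

definition top_sets :: "nat set set" where
  "top_sets = {u. u \<subseteq> {..<length es} \<and> card u = i \<and> (m - 1) * card (comps V es u) = j}"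

lemma fst_top_state [simp]: "fst (top_state u) = u"
  by (simp add: top_state_def)

lemma inj_top_state: "inj top_state"
  by (rule injI) (simp add: top_state_def)

lemma top_state_in_states_iff: "top_state u \<in> states V es m i j \<longleftrightarrow> u \<in> top_sets"
  unfolding top_state_def top_weight_def states_def top_sets_def
  using m_ge_3 finite_comps by auto

lemma finite_top_sets: "finite top_sets"
  by (rule finite_subset[of _ "Pow {..<length es}"]) (auto simp: top_sets_def)

lemma top_sets_cong:
  assumes "u \<in> top_sets" "v \<subseteq> {..<length es}" "card v = i" "comp_of es v = comp_of es u"
  shows "v \<in> top_sets"
  using assms by (simp add: top_sets_def comps_def)

lemma top_weight_cong: "comp_of es v = comp_of es u \<Longrightarrow> top_weight v = top_weight u"
  by (intro ext) (simp add: top_weight_def comps_def)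

lemma top_sets_facts:
  assumes "u \<in> top_sets"
  shows "u \<subseteq> {..<length es}" "card u = i" "finite u" "pivot es u \<in> edge_closure es u"
    and "\<And>f. f \<in> u \<Longrightarrow> pivot es u \<le> f"
proof -
  show u: "u \<subseteq> {..<length es}" "card u = i" using assms by (auto simp: top_sets_def)
  then show "finite u" using finite_subset by blast
  have "u \<noteq> {}" using u i_pos by auto
  with u(1) show "pivot es u \<in> edge_closure es u" by (rule pivot_in_edge_closure)
  show "pivot es u \<le> f" if "f \<in> u" for f
    using that subset_edge_closure[OF u(1)] pivot_le by blast
qed

lemma states_eq_top_states: "states V es m i j = top_state ` top_sets"
proof (intro equalityI subsetI)
  fix st assume st: "st \<in> states V es m i j"
  obtain s c where st_eq: "st = (s, c)" by (cases st)
  with st have s: "s \<subseteq> {..<length es}" "card s = i"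
    and below_m: "\<forall>C\<in>comps V es s. c C < m" and zero: "\<forall>C. C \<notin> comps V es s \<longrightarrow> c C = 0"
    and sum_c: "(\<Sum>C\<in>comps V es s. c C) = j"
    by (auto simp: states_def)
  have "finite s" using s(1) finite_subset by blast
  then have "card (comps V es s) + card s \<le> card V"
    using card_comps_add_card_le[OF _ s(1)] s(2) i_lt_girth by simp
  then have "card (comps V es s) \<le> card V - i"
    using s(2) by simp
  then have "(m - 1) * card (comps V es s) \<le> (m - 1) * (card V - i)"
    by (rule mult_le_mono2)
  then have "(m - 1) * card (comps V es s) \<le> j"
    using j_ge by (rule le_trans)
  then have le_j: "(\<Sum>C\<in>comps V es s. m - 1) \<le> j"
    by (simp add: mult.commute)
  have top: "\<forall>C\<in>comps V es s. c C = m - 1"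
  proof (rule ccontr)
    assume "\<not> ?thesis"
    then obtain C where "C \<in> comps V es s" "c C \<noteq> m - 1" by blast
    with below_m have "C \<in> comps V es s" "c C < m - 1" by auto
    moreover have "\<forall>C\<in>comps V es s. c C \<le> m - 1" using below_m by auto
    ultimately have "(\<Sum>C\<in>comps V es s. c C) < (\<Sum>C\<in>comps V es s. m - 1)"
      using finite_comps[of s] by (intro sum_strict_mono_ex1) auto
    with sum_c le_j show False by simp
  qed
  then have "c = top_weight s"
    using zero by (intro ext) (simp add: top_weight_def)
  then have "st = top_state s" using st_eq by (simp add: top_state_def)
  moreover have "s \<in> top_sets"
    using st calculation top_state_in_states_iff by simp
  ultimately show "st \<in> top_state ` top_sets" by (rule image_eqI)
qed (auto simp: top_state_in_states_iff)

lemma d_edge_top_state: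
  assumes g: "g < length es"
  shows "d_edge V es m g (top_state v) =
    (if g \<in> edge_closure es v then Some (top_state (insert g v)) else None)"
proof (cases "g \<in> edge_closure es v")
  case True
  then have "comp_of es (insert g v) = comp_of es v"
    by (rule comp_of_insert_edge_closure)
  then have "top_weight (insert g v) = top_weight v"
    by (rule top_weight_cong)
  moreover have "comp_of es v (snd (es ! g)) = comp_of es v (fst (es ! g))"
    using True by (simp add: edge_closure_def comp_of_eq)
  ultimately show ?thesis
    using True by (simp add: d_edge_def top_state_def Let_def)
next
  case False
  let ?Cp = "comp_of es v (fst (es ! g))" and ?Cq = "comp_of es v (snd (es ! g))"
  have "?Cp \<noteq> ?Cq"
    using False g comp_of_self[of "snd (es ! g)" es v] by (auto simp: edge_closure_def)
  moreover have "?Cp \<in> comps V es v" "?Cq \<in> comps V es v"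
    using endpoints_in_V[OF g] by (simp_all add: comp_of_in_comps)
  ultimately show ?thesis
    using False m_ge_3 by (simp add: d_edge_def top_state_def top_weight_def Let_def)
qed

lemma d_state_top_state:
  assumes "g < length es" "g \<notin> v"
  shows "d_state V es m (top_state v) (top_state (insert g v)) =
    (if g \<in> edge_closure es v then edge_sign v g else 0)"
  using d_state_single_edge[of g es "top_state v" "top_state (insert g v)"] assms
  by (simp add: d_edge_top_state inj_top_state[THEN inj_eq])

lemma d_state_top_state_nonzero:
  assumes "d_state V es m (top_state v) t \<noteq> 0"
  obtains g where "g < length es" "g \<notin> v" "g \<in> edge_closure es v" "t = top_state (insert g v)"
  using d_state_nonzero_imp[OF assms] d_edge_top_state
  by (metis fst_top_state option.distinct(1) option.inject)

definition pivotal_sets :: "nat set set" where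
  "pivotal_sets = {s \<in> top_sets. pivot es s \<in> s}"

definition pivot_half_fst :: "nat set \<Rightarrow> 'a set" where
  "pivot_half_fst s = comp_of es (s - {pivot es s}) (fst (es ! pivot es s))"

definition pivot_half_snd :: "nat set \<Rightarrow> 'a set" where
  "pivot_half_snd s = comp_of es (s - {pivot es s}) (snd (es ! pivot es s))"

text \<open>The two halves of the pivot's component get the weights x and x^(m-2): the total degree
  stays j, and the differential survives only where an edge re-merges the two halves.\<close>
definition cut_weight :: "nat set \<Rightarrow> 'a set \<Rightarrow> nat" where
  "cut_weight s C =
     (if C = pivot_half_fst s then 1
      else if C = pivot_half_snd s then m - 2
      else if C \<in> comps V es (s - {pivot es s}) then m - 1 else 0)"

definition cut_state :: "nat set \<Rightarrow> 'a state" where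
  "cut_state s = (s - {pivot es s}, cut_weight s)"

lemma endpoint_comps_ne_below_i:
  assumes "r \<subseteq> {..<length es}" "card r < i" "e < length es" "e \<notin> r"
  shows "comp_of es r (fst (es ! e)) \<noteq> comp_of es r (snd (es ! e))"
proof (rule endpoint_comps_ne_below_girth)
  show "finite r" using assms(1) finite_subset by blast
  have "enat (Suc (card r)) \<le> enat i" using assms(2) by simp
  then show "enat (Suc (card r)) < girth es" using i_lt_girth by (rule order_le_less_trans)
qed (use assms in auto)

context
  fixes s assumes s: "s \<in> pivotal_sets"
begin

lemma pivotal_set_facts:
  "s \<subseteq> {..<length es}" "finite s" "pivot es s \<in> s" "pivot es s < length es"
  "s - {pivot es s} \<subseteq> {..<length es}" "card (s - {pivot es s}) = i - 1"
  "card (s - {pivot es s}) < i" "insert (pivot es s) (s - {pivot es s}) = s"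
  using s top_sets_facts[of s] i_pos by (auto simp: pivotal_sets_def card_Diff_singleton)

lemma pivot_halves_ne: "pivot_half_fst s \<noteq> pivot_half_snd s"
  unfolding pivot_half_fst_def pivot_half_snd_def
  using pivotal_set_facts by (intro endpoint_comps_ne_below_i) auto

lemma pivot_halves_in_comps:
  "pivot_half_fst s \<in> comps V es (s - {pivot es s})"
  "pivot_half_snd s \<in> comps V es (s - {pivot es s})"
  unfolding pivot_half_fst_def pivot_half_snd_def
  using endpoints_in_V pivotal_set_facts(4) by (simp_all add: comp_of_in_comps)

lemma card_comps_pivotal_set:
  "card (comps V es s) = card (comps V es (s - {pivot es s})) - 1"
  using card_comps_insert_separate[OF pivotal_set_facts(4)] pivot_halves_ne pivotal_set_facts(8)
  unfolding pivot_half_fst_def pivot_half_snd_def by metis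

lemma cut_state_in_states: "cut_state s \<in> states V es m (i - 1) j"
proof -
  let ?r = "s - {pivot es s}" and ?C1 = "pivot_half_fst s" and ?C2 = "pivot_half_snd s"
  let ?c = "cut_weight s"
  have fin: "finite (comps V es ?r)" by (rule finite_comps)
  have two: "card (comps V es ?r) \<ge> 2"
    using card_mono[OF fin, of "{?C1, ?C2}"] pivot_halves_in_comps pivot_halves_ne by simp
  have "(\<Sum>C\<in>comps V es ?r. ?c C) = ?c ?C1 + (\<Sum>C\<in>comps V es ?r - {?C1}. ?c C)"
    using fin pivot_halves_in_comps(1) by (rule sum.remove)
  also have "(\<Sum>C\<in>comps V es ?r - {?C1}. ?c C) = ?c ?C2 + (\<Sum>C\<in>comps V es ?r - {?C1} - {?C2}. ?c C)"
    using fin pivot_halves_in_comps pivot_halves_ne by (intro sum.remove) auto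
  also have "(\<Sum>C\<in>comps V es ?r - {?C1} - {?C2}. ?c C) = (\<Sum>C\<in>comps V es ?r - {?C1} - {?C2}. m - 1)"
    by (rule sum.cong) (auto simp: cut_weight_def)
  also have "\<dots> = (m - 1) * (card (comps V es ?r) - 2)"
    using fin pivot_halves_in_comps pivot_halves_ne by (simp add: card_Diff_singleton numeral_2_eq_2)
  also have "?c ?C1 + (?c ?C2 + (m - 1) * (card (comps V es ?r) - 2)) =
      (m - 1) * (card (comps V es ?r) - 1)"
  proof -
    obtain K where K: "card (comps V es ?r) = K + 2" using two by (metis add.commute le_Suc_ex)
    obtain M where M: "m = M + 3" using m_ge_3 by (metis add.commute le_Suc_ex)
    have "?c ?C1 = 1" "?c ?C2 = m - 2"
      using pivot_halves_ne by (simp_all add: cut_weight_def)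
    then show ?thesis by (simp add: K M algebra_simps)
  qed
  also have "\<dots> = j"
    using s card_comps_pivotal_set by (simp add: pivotal_sets_def top_sets_def)
  finally have "(\<Sum>C\<in>comps V es ?r. ?c C) = j" .
  then show ?thesis
    unfolding cut_state_def states_def
    using pivotal_set_facts pivot_halves_in_comps m_ge_3 by (auto simp: cut_weight_def)
qed

lemma cut_weight_sum_lt_iff:
  assumes "X \<in> comps V es (s - {pivot es s})" "Y \<in> comps V es (s - {pivot es s})" "X \<noteq> Y"
  shows "cut_weight s X + cut_weight s Y < m \<longleftrightarrow> {X, Y} = {pivot_half_fst s, pivot_half_snd s}"
  using assms pivot_halves_ne m_ge_3 unfolding cut_weight_def
  by (cases "X = pivot_half_fst s"; cases "X = pivot_half_snd s";
      cases "Y = pivot_half_fst s"; cases "Y = pivot_half_snd s") (simp_all add: doubleton_eq_iff)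

lemma cut_weight_merge:
  assumes e: "e < length es" and sep: "comp_of es r (fst (es ! e)) \<noteq> comp_of es r (snd (es ! e))"
    and r: "r = s - {pivot es s}"
    and halves: "{comp_of es r (fst (es ! e)), comp_of es r (snd (es ! e))} =
      {pivot_half_fst s, pivot_half_snd s}"
  shows "(\<lambda>C. if C = comp_of es r (fst (es ! e)) \<union> comp_of es r (snd (es ! e))
      then cut_weight s (comp_of es r (fst (es ! e))) + cut_weight s (comp_of es r (snd (es ! e)))
      else if C \<in> comps V es (insert e r) then cut_weight s C else 0) = top_weight (insert e r)"
proof
  fix C
  let ?Ca = "comp_of es r (fst (es ! e))" and ?Cb = "comp_of es r (snd (es ! e))"
  have comps: "comps V es (insert e r) = insert (?Ca \<union> ?Cb) (comps V es r - {?Ca, ?Cb})"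
    using comps_insert_separate[OF e sep] .
  have sum: "cut_weight s ?Ca + cut_weight s ?Cb = m - 1"
    using halves pivot_halves_ne m_ge_3 by (auto simp: cut_weight_def doubleton_eq_iff)
  show "(if C = ?Ca \<union> ?Cb then cut_weight s ?Ca + cut_weight s ?Cb
      else if C \<in> comps V es (insert e r) then cut_weight s C else 0) = top_weight (insert e r) C"
    using comps sum halves r by (auto simp: top_weight_def cut_weight_def)
qed

lemma d_edge_cut_state:
  assumes e: "e < length es" "e \<notin> s - {pivot es s}"
  shows "d_edge V es m e (cut_state s) =
    (if comp_of es (insert e (s - {pivot es s})) = comp_of es s
     then Some (top_state (insert e (s - {pivot es s}))) else None)"
proof -
  let ?r = "s - {pivot es s}"
  let ?Ca = "comp_of es ?r (fst (es ! e))" and ?Cb = "comp_of es ?r (snd (es ! e))"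
  have sep: "?Ca \<noteq> ?Cb"
    using pivotal_set_facts e by (intro endpoint_comps_ne_below_i) auto
  have in_comps: "?Ca \<in> comps V es ?r" "?Cb \<in> comps V es ?r"
    using endpoints_in_V[OF e(1)] by (simp_all add: comp_of_in_comps)
  have reconnect: "comp_of es (insert e ?r) = comp_of es s \<longleftrightarrow>
      {?Ca, ?Cb} = {pivot_half_fst s, pivot_half_snd s}"
    using comp_of_insert_eq_iff[OF e(1) pivotal_set_facts(4), of ?r] pivot_halves_ne pivotal_set_facts(8)
    unfolding pivot_half_fst_def pivot_half_snd_def by simp
  have too_heavy: "m \<le> cut_weight s ?Ca + cut_weight s ?Cb \<longleftrightarrow>
      {?Ca, ?Cb} \<noteq> {pivot_half_fst s, pivot_half_snd s}"
    using cut_weight_sum_lt_iff[OF in_comps sep] by linarith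
  show ?thesis
    using sep too_heavy reconnect cut_weight_merge[OF e(1) sep refl]
    by (simp add: d_edge_def cut_state_def top_state_def Let_def)
qed

lemma d_state_cut_state:
  assumes e: "e < length es" "e \<notin> s - {pivot es s}"
  shows "d_state V es m (cut_state s) (top_state (insert e (s - {pivot es s}))) =
    (if comp_of es (insert e (s - {pivot es s})) = comp_of es s then edge_sign (s - {pivot es s}) e else 0)"
  using d_state_single_edge[of e es "cut_state s"] d_edge_cut_state[OF e] e
  by (simp add: cut_state_def)

lemma d_state_cut_state_own_top_state: "d_state V es m (cut_state s) (top_state s) = 1"
proof -
  note sf = top_sets_facts[of s]
  have "s \<in> top_sets" using s by (simp add: pivotal_sets_def)
  then have "d_state V es m (cut_state s) (top_state s) = edge_sign (s - {pivot es s}) (pivot es s)"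
    using d_state_cut_state[of "pivot es s"] pivotal_set_facts(4,8) by simp
  also have "\<dots> = 1" using sf(5) \<open>s \<in> top_sets\<close> by (intro edge_sign_eq_1) auto
  finally show ?thesis .
qed

lemma d_state_cut_state_nonzero:
  assumes "d_state V es m (cut_state s) t \<noteq> 0"
  obtains e where "e < length es" "e \<notin> s - {pivot es s}"
    "comp_of es (insert e (s - {pivot es s})) = comp_of es s"
    "t = top_state (insert e (s - {pivot es s}))"
proof -
  obtain e where e: "e < length es" "e \<notin> s - {pivot es s}" "d_edge V es m e (cut_state s) = Some t"
    using d_state_nonzero_imp[OF assms] by (auto simp: cut_state_def)
  then show thesis
    using that d_edge_cut_state[OF e(1,2)] by (simp split: if_splits)
qed

end

subsection \<open>The primitive of a cocycle\<close>

lemma finite_pivotal_sets: "finite pivotal_sets"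
  using finite_top_sets by (simp add: pivotal_sets_def)

lemma d_state_cut_state_target:
  assumes s: "s \<in> pivotal_sets" and "d_state V es m (cut_state s) t \<noteq> 0"
  shows "t \<in> states V es m i j"
proof -
  obtain e where e: "e < length es" "e \<notin> s - {pivot es s}"
    and same: "comp_of es (insert e (s - {pivot es s})) = comp_of es s"
    and t: "t = top_state (insert e (s - {pivot es s}))"
    using d_state_cut_state_nonzero[OF s assms(2)] by blast
  have "s \<in> top_sets" using s by (simp add: pivotal_sets_def)
  moreover have "insert e (s - {pivot es s}) \<subseteq> {..<length es}"
    using e(1) pivotal_set_facts(5)[OF s] by simp
  moreover have "card (insert e (s - {pivot es s})) = i"
    using pivotal_set_facts(2,6)[OF s] e(2) i_pos by simp
  ultimately have "insert e (s - {pivot es s}) \<in> top_sets"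
    using same by (rule top_sets_cong)
  then show ?thesis using t top_state_in_states_iff by simp
qed

lemma sum_cut_states_at_top_state_pivot_in:
  assumes u: "u \<in> top_sets" and a: "pivot es u \<in> u"
  shows "(\<Sum>s\<in>pivotal_sets. x (top_state s) * d_state V es m (cut_state s) (top_state u)) =
    x (top_state u)"
proof -
  let ?a = "pivot es u"
  have u_pivotal: "u \<in> pivotal_sets" using u a by (simp add: pivotal_sets_def)
  have others: "d_state V es m (cut_state s) (top_state u) = 0"
    if s: "s \<in> pivotal_sets" "s \<noteq> u" for s
  proof (rule ccontr)
    assume "d_state V es m (cut_state s) (top_state u) \<noteq> 0"
    then obtain e where e: "e \<notin> s - {pivot es s}"
      and same: "comp_of es (insert e (s - {pivot es s})) = comp_of es s"
      and "top_state u = top_state (insert e (s - {pivot es s}))"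
      using d_state_cut_state_nonzero[OF s(1)] by metis
    then have u_eq: "u = insert e (s - {pivot es s})" by (simp add: top_state_def)
    then have "pivot es s = ?a" using same by (metis pivot_cong)
    with u_eq a e have "e = ?a" by auto
    with u_eq \<open>pivot es s = ?a\<close> pivotal_set_facts(8)[OF s(1)] s(2) show False by simp
  qed
  have "d_state V es m (cut_state u) (top_state u) = 1"
    using u_pivotal by (rule d_state_cut_state_own_top_state)
  moreover have "(\<Sum>s\<in>pivotal_sets - {u}.
      x (top_state s) * d_state V es m (cut_state s) (top_state u)) = 0"
    using others by (intro sum.neutral) auto
  moreover have "(\<Sum>s\<in>pivotal_sets. x (top_state s) * d_state V es m (cut_state s) (top_state u)) =
      x (top_state u) * d_state V es m (cut_state u) (top_state u) +
      (\<Sum>s\<in>pivotal_sets - {u}. x (top_state s) * d_state V es m (cut_state s) (top_state u))"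
    using finite_pivotal_sets u_pivotal by (rule sum.remove)
  ultimately show ?thesis by simp
qed

definition pivot_exchanges :: "nat set \<Rightarrow> nat set" where
  "pivot_exchanges u = {e \<in> u. comp_of es (insert (pivot es u) (u - {e})) = comp_of es u}"

context
  fixes u and x :: "'a state \<Rightarrow> int"
  assumes u: "u \<in> top_sets" and pivot_notin: "pivot es u \<notin> u"
begin

lemma pivot_exchange_facts:
  assumes e: "e \<in> pivot_exchanges u"
  shows "insert (pivot es u) (u - {e}) \<in> pivotal_sets"
    and "pivot es (insert (pivot es u) (u - {e})) = pivot es u"
    and "pivot es u < e"
    and "e \<in> edge_closure es (insert (pivot es u) (u - {e}))"
proof -
  let ?a = "pivot es u" and ?v = "insert (pivot es u) (u - {e})"
  note uf = top_sets_facts[OF u]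
  have eu: "e \<in> u" and same: "comp_of es ?v = comp_of es u"
    using e by (auto simp: pivot_exchanges_def)
  show pv: "pivot es ?v = ?a" using same by (rule pivot_cong)
  have "?a \<in> edge_closure es u" by (rule uf(4))
  then have "?a < length es" by (simp add: edge_closure_def)
  then have "?v \<subseteq> {..<length es}" using uf(1) by auto
  moreover have "card ?v = i"
    using uf(2,3) eu pivot_notin i_pos by (simp add: card_Diff_singleton)
  ultimately have "?v \<in> top_sets"
    using same by (rule top_sets_cong[OF u])
  then show "?v \<in> pivotal_sets" using pv by (simp add: pivotal_sets_def)
  show "?a < e" using uf(5)[OF eu] eu pivot_notin by (cases "?a = e") auto
  have "e \<in> edge_closure es u" by (rule subsetD[OF subset_edge_closure[OF uf(1)] eu])
  then show "e \<in> edge_closure es ?v" using edge_closure_cong[OF same] by simp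
qed

lemma inj_on_pivot_exchange: "inj_on (\<lambda>e. insert (pivot es u) (u - {e})) (pivot_exchanges u)"
proof (rule inj_onI)
  fix e f assume "e \<in> pivot_exchanges u" "f \<in> pivot_exchanges u"
    and eq: "insert (pivot es u) (u - {e}) = insert (pivot es u) (u - {f})"
  then have "e \<in> u" "f \<in> u" by (auto simp: pivot_exchanges_def)
  have "u - {e} = insert (pivot es u) (u - {e}) - {pivot es u}"
    "u - {f} = insert (pivot es u) (u - {f}) - {pivot es u}"
    using pivot_notin by auto
  with eq have "u - {e} = u - {f}" by simp
  with \<open>f \<in> u\<close> show "e = f" by blast
qed

lemma d_state_cut_state_outside_exchanges:
  assumes s: "s \<in> pivotal_sets" "s \<notin> (\<lambda>e. insert (pivot es u) (u - {e})) ` pivot_exchanges u"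
  shows "d_state V es m (cut_state s) (top_state u) = 0"
proof (rule ccontr)
  let ?a = "pivot es u" and ?ex = "\<lambda>e. insert (pivot es u) (u - {e})"
  assume "d_state V es m (cut_state s) (top_state u) \<noteq> 0"
  then obtain e where e: "e \<notin> s - {pivot es s}"
    and same: "comp_of es (insert e (s - {pivot es s})) = comp_of es s"
    and "top_state u = top_state (insert e (s - {pivot es s}))"
    using d_state_cut_state_nonzero[OF s(1)] by metis
  then have u_eq: "u = insert e (s - {pivot es s})" by (simp add: top_state_def)
  then have "pivot es s = ?a" using same by (metis pivot_cong)
  then have "e \<in> u" "s = ?ex e"
    using u_eq e pivot_notin pivotal_set_facts(3)[OF s(1)] by auto
  moreover have "comp_of es (?ex e) = comp_of es u"
  proof -
    have "comp_of es (?ex e) = comp_of es s" using \<open>s = ?ex e\<close> by simp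
    also have "\<dots> = comp_of es u" using same u_eq by simp
    finally show ?thesis .
  qed
  ultimately have "s \<in> ?ex ` pivot_exchanges u" by (auto simp: pivot_exchanges_def)
  with s(2) show False ..
qed

lemma d_state_cut_state_pivot_exchange:
  assumes e: "e \<in> pivot_exchanges u"
  shows "d_state V es m (cut_state (insert (pivot es u) (u - {e}))) (top_state u) =
    edge_sign (u - {e}) e"
proof -
  let ?v = "insert (pivot es u) (u - {e})"
  have eu: "e \<in> u" and same: "comp_of es ?v = comp_of es u"
    using e by (auto simp: pivot_exchanges_def)
  have removed: "?v - {pivot es ?v} = u - {e}"
    using pivot_exchange_facts(2)[OF e] pivot_notin by auto
  have "e < length es" using eu top_sets_facts(1)[OF u] by auto
  then show ?thesis
    using d_state_cut_state[OF pivot_exchange_facts(1)[OF e], of e] removed same eu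
    by (simp add: insert_absorb)
qed

lemma sum_cut_states_at_top_state_pivot_notin:
  "(\<Sum>s\<in>pivotal_sets. x (top_state s) * d_state V es m (cut_state s) (top_state u)) =
    (\<Sum>e\<in>pivot_exchanges u. x (top_state (insert (pivot es u) (u - {e}))) * edge_sign (u - {e}) e)"
proof -
  let ?ex = "\<lambda>e. insert (pivot es u) (u - {e})"
  let ?f = "\<lambda>s. x (top_state s) * d_state V es m (cut_state s) (top_state u)"
  have "(\<Sum>s\<in>pivotal_sets. ?f s) = (\<Sum>s\<in>?ex ` pivot_exchanges u. ?f s)"
    using finite_pivotal_sets pivot_exchange_facts(1) d_state_cut_state_outside_exchanges
    by (intro sum.mono_neutral_right) auto
  also have "\<dots> = (\<Sum>e\<in>pivot_exchanges u. ?f (?ex e))"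
    using inj_on_pivot_exchange by (rule sum.reindex_cong) simp_all
  also have "\<dots> = (\<Sum>e\<in>pivot_exchanges u. x (top_state (?ex e)) * edge_sign (u - {e}) e)"
    using d_state_cut_state_pivot_exchange by simp
  finally show ?thesis .
qed

lemma d_state_top_state_outside_exchanges:
  assumes v: "v \<in> top_sets" "v \<notin> insert u ((\<lambda>e. insert (pivot es u) (u - {e})) ` pivot_exchanges u)"
  shows "d_state V es m (top_state v) (top_state (insert (pivot es u) u)) = 0"
proof (rule ccontr)
  let ?a = "pivot es u"
  assume "d_state V es m (top_state v) (top_state (insert ?a u)) \<noteq> 0"
  then obtain g where g: "g \<notin> v" "g \<in> edge_closure es v"
    "top_state (insert ?a u) = top_state (insert g v)"
    by (rule d_state_top_state_nonzero)
  then have ins: "insert g v = insert ?a u" by (simp add: top_state_def)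
  show False
  proof (cases "g = ?a")
    case True
    with ins g(1) pivot_notin have "v = u" by (metis Diff_insert_absorb)
    with v(2) show False by simp
  next
    case False
    with ins g(1) have gu: "g \<in> u" and v_eq: "v = insert ?a (u - {g})" by auto
    have "comp_of es v = comp_of es (insert g v)"
      using comp_of_insert_edge_closure[OF g(2)] by simp
    also have "\<dots> = comp_of es u"
      using ins comp_of_insert_edge_closure[OF top_sets_facts(4)[OF u]] by simp
    finally show False using gu v_eq v(2) by (auto simp: pivot_exchanges_def)
  qed
qed

lemma d_state_top_state_insert_pivot:
  "d_state V es m (top_state u) (top_state (insert (pivot es u) u)) = 1"
proof -
  have "pivot es u < length es" using top_sets_facts(4)[OF u] by (simp add: edge_closure_def)
  then show ?thesis
    using d_state_top_state[OF _ pivot_notin] top_sets_facts(4,5)[OF u] edge_sign_eq_1 by simp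
qed

lemma d_state_pivot_exchange_insert_pivot:
  assumes e: "e \<in> pivot_exchanges u"
  shows "d_state V es m (top_state (insert (pivot es u) (u - {e}))) (top_state (insert (pivot es u) u)) =
    - edge_sign (u - {e}) e"
proof -
  let ?a = "pivot es u" and ?v = "insert (pivot es u) (u - {e})"
  have eu: "e \<in> u" using e by (simp add: pivot_exchanges_def)
  have "insert e ?v = insert ?a u" using eu by auto
  moreover have "e < length es" "e \<notin> ?v"
    using eu top_sets_facts(1)[OF u] pivot_exchange_facts(3)[OF e] by auto
  ultimately have "d_state V es m (top_state ?v) (top_state (insert ?a u)) = edge_sign ?v e"
    using d_state_top_state pivot_exchange_facts(4)[OF e] by metis
  also have "\<dots> = - edge_sign (u - {e}) e"
    using top_sets_facts(3)[OF u] pivot_exchange_facts(3)[OF e] pivot_notin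
    by (intro edge_sign_insert_less) auto
  finally show ?thesis .
qed

lemma cocycle_at_top_state:
  assumes cocycle: "dco V es m i j x = (\<lambda>_. 0)"
  shows "x (top_state u) =
    (\<Sum>e\<in>pivot_exchanges u. x (top_state (insert (pivot es u) (u - {e}))) * edge_sign (u - {e}) e)"
proof -
  let ?ex = "\<lambda>e. insert (pivot es u) (u - {e})"
  let ?f = "\<lambda>v. x (top_state v) * d_state V es m (top_state v) (top_state (insert (pivot es u) u))"
  have not_ex: "u \<notin> ?ex ` pivot_exchanges u" using pivot_notin by auto
  have ex_top: "?ex ` pivot_exchanges u \<subseteq> top_sets"
    using pivot_exchange_facts(1) by (auto simp: pivotal_sets_def)
  have "0 = dco V es m i j x (top_state (insert (pivot es u) u))" using cocycle by simp
  also have "\<dots> = (\<Sum>v\<in>top_sets. ?f v)"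
    unfolding dco_def states_eq_top_states
    by (rule sum.reindex_cong[OF inj_on_subset[OF inj_top_state]]) simp_all
  also have "\<dots> = (\<Sum>v\<in>insert u (?ex ` pivot_exchanges u). ?f v)"
    using finite_top_sets u ex_top d_state_top_state_outside_exchanges
    by (intro sum.mono_neutral_right) auto
  also have "\<dots> = ?f u + (\<Sum>e\<in>pivot_exchanges u. ?f (?ex e))"
    using not_ex finite_subset[OF ex_top finite_top_sets] sum.reindex[OF inj_on_pivot_exchange]
    by simp
  also have "\<dots> = x (top_state u) -
      (\<Sum>e\<in>pivot_exchanges u. x (top_state (?ex e)) * edge_sign (u - {e}) e)"
    using d_state_top_state_insert_pivot d_state_pivot_exchange_insert_pivot by (simp add: sum_negf)
  finally show ?thesis by simp
qed

end

theorem cohom_vanishes: "cohom_vanishes V es m i j"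
  unfolding cohom_vanishes_def
proof (intro allI impI, elim conjE)
  fix x assume x: "cochain V es m i j x" and cocycle: "dco V es m i j x = (\<lambda>_. 0)"
  define y where "y st = (\<Sum>s\<in>pivotal_sets. if st = cut_state s then x (top_state s) else 0)" for st
  have "cochain V es m (i - 1) j y"
    unfolding cochain_def y_def using cut_state_in_states by (auto intro!: sum.neutral)
  moreover have "dco V es m (i - 1) j y t = x t" for t
  proof -
    have "dco V es m (i - 1) j y t =
        (\<Sum>s\<in>pivotal_sets. x (top_state s) * d_state V es m (cut_state s) t)"
      unfolding y_def using finite_pivotal_sets cut_state_in_states by (rule dco_sum_basis)
    also have "\<dots> = x t"
    proof (cases "t \<in> states V es m i j")
      case True
      then obtain u where u: "u \<in> top_sets" "t = top_state u"
        using states_eq_top_states by auto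
      then show ?thesis
        using sum_cut_states_at_top_state_pivot_in sum_cut_states_at_top_state_pivot_notin
          cocycle_at_top_state[OF _ _ cocycle] by (cases "pivot es u \<in> u") auto
    next
      case False
      then have "x t = 0" using x unfolding cochain_def by blast
      moreover have "\<forall>s\<in>pivotal_sets. d_state V es m (cut_state s) t = 0"
        using False d_state_cut_state_target by blast
      ultimately show ?thesis by simp
    qed
    finally show ?thesis .
  qed
  ultimately show "\<exists>y. cochain V es m (i - 1) j y \<and> dco V es m (i - 1) j y = x" by blast
qed

end

theorem proposition2p8:
  fixes V :: "'a set" and es :: "('a \<times> 'a) list" and m i j :: nat
  assumes "wf_graph V es"
    and "m \<ge> 3"
    and "0 < i" and "enat i < girth es"
    and "j \<ge> (m - 1) * (card V - i)"
  shows "cohom_vanishes V es m i j"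
proof -
  interpret chromatic_top_degree V es m i j
    using assms by unfold_locales
  show ?thesis by (rule cohom_vanishes)
qed

end
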